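(* Let $(X,\mathrm{dist})$ be a metric space, $\Sigma$ a metric space, and $\{U_\sigma(t,\tau)\}_{\sigma\in\Sigma}$ a family of processes on $X$. If the family is uniformly asymptotically compact, then $A^\star_\Sigma$ is a compact uniformly attracting set.
   Context: A process on $X$ is a family of maps $U(t,\tau):X\to X$, indexed by reals $t\ge\tau$, with $U(\tau,\tau)=\mathrm{id}_X$ and $U(t,\tau)=U(t,s)U(s,\tau)$ for $t\ge s\ge\tau$; no continuity is assumed. For nonempty $B,C\subset X$, $\delta_X(B,C)=\sup_{x\in B}\inf_{\xi\in C}\mathrm{dist}(x,\xi)$. A set $K\subset X$ is uniformly attracting if for every bounded $C\subset X$, $\lim_{t-\tau\to\infty}\sup_{\sigma\in\Sigma}\delta_X(U_\sigma(t,\tau)C,K)=0$. The family is uniformly asymptotically compact if there exists a compact uniformly attracting set. $\mathfrak{C}_\Sigma$ is the collection of all sequences $y_n=U_{\sigma_n}(t_n,\tau_n)x_n$ with $x_n$ a bounded sequence in $X$, $\sigma_n\in\Sigma$, $t_n-\tau_n\to\infty$, and $A^\star_\Sigma=\{x\in X: y_n\to x$ along a subsequence, for some $y_n\in\mathfrak{C}_\Sigma\}$. *)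

theory Defs
  imports "HOL-Analysis.Analysis"
begin

text \<open>A process on X (here X is the whole metric space type 'a): no continuity assumed.\<close>
definition process :: "(real \<Rightarrow> real \<Rightarrow> 'a \<Rightarrow> 'a) \<Rightarrow> bool" where
  "process U \<longleftrightarrow> (\<forall>\<tau>. U \<tau> \<tau> = id) \<and>
     (\<forall>t s \<tau>. \<tau> \<le> s \<and> s \<le> t \<longrightarrow> U t \<tau> = U t s \<circ> U s \<tau>)"

text \<open>Hausdorff semidistance delta_X(B,C) = sup_{x in B} inf_{xi in C} dist x xi,
  taken in the extended reals (so inf over empty C is +infinity).\<close>
definition semidist :: "'a::metric_space set \<Rightarrow> 'a set \<Rightarrow> ereal" where
  "semidist B C = (SUP x\<in>B. INF \<xi>\<in>C. ereal (dist x \<xi>))"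

definition unif_attracting ::
  "('s \<Rightarrow> real \<Rightarrow> real \<Rightarrow> 'a::metric_space \<Rightarrow> 'a) \<Rightarrow> 's set \<Rightarrow> 'a set \<Rightarrow> bool" where
  "unif_attracting U \<Sigma> K \<longleftrightarrow>
     (\<forall>C. bounded C \<and> C \<noteq> {} \<longrightarrow>
        (\<forall>e>0. \<exists>T. \<forall>t \<tau>. \<tau> \<le> t \<and> t - \<tau> \<ge> T \<longrightarrow>
            \<bar>SUP \<sigma>\<in>\<Sigma>. semidist (U \<sigma> t \<tau> ` C) K\<bar> < ereal e))"

definition unif_asymp_compact ::
  "('s \<Rightarrow> real \<Rightarrow> real \<Rightarrow> 'a::metric_space \<Rightarrow> 'a) \<Rightarrow> 's set \<Rightarrow> bool" where
  "unif_asymp_compact U \<Sigma> \<longleftrightarrow> (\<exists>K. compact K \<and> unif_attracting U \<Sigma> K)"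

definition seq_collection ::
  "('s \<Rightarrow> real \<Rightarrow> real \<Rightarrow> 'a::metric_space \<Rightarrow> 'a) \<Rightarrow> 's set \<Rightarrow> (nat \<Rightarrow> 'a) set" where
  "seq_collection U \<Sigma> = {y. \<exists>x \<sigma> t \<tau>. bounded (range x) \<and> (\<forall>n. \<sigma> n \<in> \<Sigma>) \<and>
       (\<forall>n. \<tau> n \<le> t n) \<and> filterlim (\<lambda>n. t n - \<tau> n) at_top sequentially \<and>
       (\<forall>n. y n = U (\<sigma> n) (t n) (\<tau> n) (x n))}"

definition Astar ::
  "('s \<Rightarrow> real \<Rightarrow> real \<Rightarrow> 'a::metric_space \<Rightarrow> 'a) \<Rightarrow> 's set \<Rightarrow> 'a set" where
  "Astar U \<Sigma> = {x. \<exists>y\<in>seq_collection U \<Sigma>. \<exists>r. strict_mono r \<and> (y \<circ> r) \<longlonglongrightarrow> x}"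

end

theory Submission
  imports Defs
begin

text \<open>Every sequence of \<open>\<frak>C\<^sub>\<Sigma>\<close> approaches the compact attracting set \<open>K\<close>, hence has a
  subsequence converging to a point of \<open>K\<close>; so \<open>A\<^sup>\<star>\<^sub>\<Sigma>\<close> is a nonempty subset of \<open>K\<close>.
  It is closed, hence compact, because it is the intersection over \<open>N\<close> of the closures of the
  images, after elapsed time at least \<open>N\<close>, of the bounded \<open>1\<close>-neighbourhood of \<open>K\<close>: by the
  cocycle property a sequence of \<open>\<frak>C\<^sub>\<Sigma>\<close> may be restarted at a time when it is already
  \<open>1\<close>-close to \<open>K\<close>, so that all initial data lie in one bounded set. Finally, if
  \<open>A\<^sup>\<star>\<^sub>\<Sigma>\<close> failed to attract some bounded set uniformly, the orbits staying \<open>\<epsilon>\<close>-away from it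
  would form a sequence of \<open>\<frak>C\<^sub>\<Sigma>\<close> with a subsequence converging into \<open>A\<^sup>\<star>\<^sub>\<Sigma>\<close>.\<close>

lemma compact_infdist_attained:
  assumes "compact K" "K \<noteq> {}"
  obtains k where "k \<in> K" "infdist x K = dist x k"
proof -
  have "continuous_on K (dist x)"
    by (intro continuous_intros)
  then obtain k where k: "k \<in> K" "\<forall>k'\<in>K. dist x k \<le> dist x k'"
    using continuous_attains_inf[OF assms] by blast
  then have "infdist x K = dist x k"
    by (intro antisym infdist_le) (auto simp: infdist_notempty assms(2) intro: cINF_greatest)
  with k(1) show thesis by (rule that)
qed

lemma compact_infdist_tendsto_imp_convergent_subseq:
  assumes "compact K" "K \<noteq> {}" and y: "(\<lambda>n. infdist (y n) K) \<longlonglongrightarrow> 0"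
  obtains l r where "l \<in> K" "strict_mono r" "(y \<circ> r) \<longlonglongrightarrow> l"
proof -
  have "\<forall>n. \<exists>k. k \<in> K \<and> infdist (y n) K = dist (y n) k"
    using compact_infdist_attained[OF assms(1,2)] by blast
  then obtain k where k: "\<And>n. k n \<in> K" "\<And>n. infdist (y n) K = dist (y n) (k n)"
    by (auto dest!: choice)
  obtain l r where lr: "l \<in> K" "strict_mono r" "(k \<circ> r) \<longlonglongrightarrow> l"
    using k(1) by (blast intro: seq_compactE[OF compact_imp_seq_compact[OF assms(1)]])
  have "(\<lambda>n. dist (y (r n)) (k (r n)) + dist (k (r n)) l) \<longlonglongrightarrow> 0"
    using tendsto_add[OF LIMSEQ_subseq_LIMSEQ[OF y lr(2)] tendsto_dist_iff[THEN iffD1, OF lr(3)]]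
    by (simp add: k(2) comp_def)
  then have "(\<lambda>n. dist (y (r n)) l) \<longlonglongrightarrow> 0"
    by (rule Lim_null_comparison[rotated]) (simp add: dist_triangle)
  then have "(y \<circ> r) \<longlonglongrightarrow> l"
    unfolding comp_def by (rule tendsto_dist_iff[THEN iffD2])
  with lr(1,2) show thesis by (rule that)
qed

lemma bounded_infdist_le:
  assumes "bounded K" "K \<noteq> {}"
  shows "bounded {x. infdist x K \<le> e}"
proof -
  obtain a B where B: "\<And>k. k \<in> K \<Longrightarrow> dist a k \<le> B"
    using assms(1) unfolding bounded_def by blast
  have "dist a x \<le> B + (e + 1)" if "infdist x K \<le> e" for x
  proof -
    have "infdist x K < e + 1"
      using that by linarith
    then obtain k where "k \<in> K" "dist x k < e + 1"
      using assms(2) by (auto simp: infdist_notempty cINF_less_iff)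
    with B[of k] show ?thesis using dist_triangle[of a x k] by (simp add: dist_commute)
  qed
  then show ?thesis unfolding bounded_def by blast
qed

lemma semidist_eq_SUP_infdist:
  "K \<noteq> {} \<Longrightarrow> semidist B K = (SUP x\<in>B. ereal (infdist x K))"
  using ereal_Inf'[of "dist _ ` K"]
  by (simp add: semidist_def infdist_notempty image_comp)

lemma infdist_le_SUP_semidist:
  assumes "K \<noteq> {}" "\<sigma> \<in> \<Sigma>" "x \<in> F \<sigma>"
  shows "ereal (infdist x K) \<le> (SUP \<sigma>\<in>\<Sigma>. semidist (F \<sigma>) K)"
proof -
  have "ereal (infdist x K) \<le> semidist (F \<sigma>) K"
    unfolding semidist_eq_SUP_infdist[OF assms(1)] using assms(3) by (rule SUP_upper)
  also have "\<dots> \<le> (SUP \<sigma>\<in>\<Sigma>. semidist (F \<sigma>) K)"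
    using assms(2) by (rule SUP_upper)
  finally show ?thesis .
qed

lemma SUP_semidist_le:
  assumes "K \<noteq> {}" "\<And>\<sigma> x. \<sigma> \<in> \<Sigma> \<Longrightarrow> x \<in> F \<sigma> \<Longrightarrow> infdist x K \<le> d"
  shows "(SUP \<sigma>\<in>\<Sigma>. semidist (F \<sigma>) K) \<le> ereal d"
  using assms by (simp add: semidist_eq_SUP_infdist SUP_le_iff)

lemma unif_attracting_nonempty:
  assumes "unif_attracting U \<Sigma> K"
  shows "\<Sigma> \<noteq> {}" "K \<noteq> {}"
proof -
  obtain T where T: "\<And>t \<tau>. \<tau> \<le> t \<Longrightarrow> t - \<tau> \<ge> T \<Longrightarrow>
      \<bar>SUP \<sigma>\<in>\<Sigma>. semidist (U \<sigma> t \<tau> ` {undefined}) K\<bar> < ereal 1"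
    using assms unfolding unif_attracting_def
    by (metis bounded_empty bounded_insert insert_not_empty zero_less_one)
  have T1: "\<bar>SUP \<sigma>\<in>\<Sigma>. semidist (U \<sigma> (max T 0) 0 ` {undefined}) K\<bar> < ereal 1"
    by (rule T) auto
  then show "\<Sigma> \<noteq> {}"
    by (auto simp: bot_ereal_def)
  with T1 show "K \<noteq> {}"
    by (intro notI) (simp add: semidist_def)
qed

lemma unif_attracting_imp_infdist_less:
  assumes "unif_attracting U \<Sigma> K" "bounded C" "e > 0"
  obtains T where "\<And>t \<tau> \<sigma> x. \<tau> \<le> t \<Longrightarrow> T \<le> t - \<tau> \<Longrightarrow> \<sigma> \<in> \<Sigma> \<Longrightarrow> x \<in> C \<Longrightarrow>
    infdist (U \<sigma> t \<tau> x) K < e"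
proof (cases "C = {}")
  case False
  with assms obtain T where T: "\<forall>t \<tau>. \<tau> \<le> t \<and> t - \<tau> \<ge> T \<longrightarrow>
      \<bar>SUP \<sigma>\<in>\<Sigma>. semidist (U \<sigma> t \<tau> ` C) K\<bar> < ereal e"
    unfolding unif_attracting_def by blast
  show thesis
  proof (rule that)
    fix t \<tau> \<sigma> x
    assume "\<tau> \<le> t" "T \<le> t - \<tau>" "\<sigma> \<in> \<Sigma>" "x \<in> C"
    let ?S = "SUP \<sigma>\<in>\<Sigma>. semidist (U \<sigma> t \<tau> ` C) K"
    have le: "ereal (infdist (U \<sigma> t \<tau> x) K) \<le> ?S"
      using infdist_le_SUP_semidist[OF unif_attracting_nonempty(2)[OF assms(1)] \<open>\<sigma> \<in> \<Sigma>\<close>,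
          where F="\<lambda>\<sigma>. U \<sigma> t \<tau> ` C"] \<open>x \<in> C\<close> by simp
    have "0 \<le> ?S"
      using le by (rule order_trans[rotated]) (simp add: infdist_nonneg)
    moreover have "\<bar>?S\<bar> < ereal e"
      using T \<open>\<tau> \<le> t\<close> \<open>T \<le> t - \<tau>\<close> by blast
    ultimately have "?S < ereal e"
      by simp
    with le have "ereal (infdist (U \<sigma> t \<tau> x) K) < ereal e"
      by (rule le_less_trans)
    then show "infdist (U \<sigma> t \<tau> x) K < e"
      by simp
  qed
qed (use that in blast)

lemma unif_attracting_if_infdist_less:
  fixes U :: "'s \<Rightarrow> real \<Rightarrow> real \<Rightarrow> 'a::metric_space \<Rightarrow> 'a"
  assumes "\<Sigma> \<noteq> {}" "K \<noteq> {}"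
    and attr: "\<And>C e. bounded C \<Longrightarrow> e > 0 \<Longrightarrow> \<exists>T. \<forall>t \<tau>. \<tau> \<le> t \<longrightarrow> T \<le> t - \<tau> \<longrightarrow>
      (\<forall>\<sigma>\<in>\<Sigma>. \<forall>x\<in>C. infdist (U \<sigma> t \<tau> x) K < e)"
  shows "unif_attracting U \<Sigma> K"
  unfolding unif_attracting_def
proof (intro allI impI)
  fix C :: "'a set" and e :: real
  assume C: "bounded C \<and> C \<noteq> {}" and "e > 0"
  then obtain T where T: "\<forall>t \<tau>. \<tau> \<le> t \<longrightarrow> T \<le> t - \<tau> \<longrightarrow>
      (\<forall>\<sigma>\<in>\<Sigma>. \<forall>x\<in>C. infdist (U \<sigma> t \<tau> x) K < e/2)"
    using attr[of C "e/2"] by auto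
  have "\<bar>SUP \<sigma>\<in>\<Sigma>. semidist (U \<sigma> t \<tau> ` C) K\<bar> < ereal e" if "\<tau> \<le> t \<and> t - \<tau> \<ge> T" for t \<tau>
  proof -
    let ?S = "SUP \<sigma>\<in>\<Sigma>. semidist (U \<sigma> t \<tau> ` C) K"
    obtain \<sigma> x where "\<sigma> \<in> \<Sigma>" "x \<in> C"
      using assms(1) C by blast
    then have "ereal (infdist (U \<sigma> t \<tau> x) K) \<le> ?S"
      using infdist_le_SUP_semidist[OF assms(2), where F="\<lambda>\<sigma>. U \<sigma> t \<tau> ` C"] by simp
    then have "0 \<le> ?S"
      by (rule order_trans[rotated]) (simp add: infdist_nonneg)
    have "?S \<le> ereal (e/2)"
      using T that by (intro SUP_semidist_le[OF assms(2)]) (auto simp: less_imp_le)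
    also have "\<dots> < ereal e"
      using \<open>e > 0\<close> by simp
    finally show ?thesis
      using \<open>0 \<le> ?S\<close> by simp
  qed
  then show "\<exists>T. \<forall>t \<tau>. \<tau> \<le> t \<and> t - \<tau> \<ge> T \<longrightarrow>
      \<bar>SUP \<sigma>\<in>\<Sigma>. semidist (U \<sigma> t \<tau> ` C) K\<bar> < ereal e"
    by blast
qed

lemma seq_collectionI:
  assumes "bounded (range x)" "\<And>n. \<sigma> n \<in> \<Sigma>" "\<And>n. \<tau> n \<le> t n" "\<And>n. real n \<le> t n - \<tau> n"
  shows "(\<lambda>n. U (\<sigma> n) (t n) (\<tau> n) (x n)) \<in> seq_collection U \<Sigma>"
proof -
  have "filterlim (\<lambda>n. t n - \<tau> n) at_top sequentially"
    using filterlim_real_sequentially by (rule filterlim_at_top_mono) (use assms(4) in simp)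
  with assms(1-3) show ?thesis
    unfolding seq_collection_def by blast
qed

lemma unif_attracting_imp_infdist_tendsto:
  assumes "unif_attracting U \<Sigma> K" "y \<in> seq_collection U \<Sigma>"
  shows "(\<lambda>n. infdist (y n) K) \<longlonglongrightarrow> 0"
proof (rule tendstoI)
  fix e :: real
  assume "e > 0"
  obtain x \<sigma> t \<tau> where y: "bounded (range x)" "\<forall>n. \<sigma> n \<in> \<Sigma>" "\<forall>n. \<tau> n \<le> t n"
    "filterlim (\<lambda>n. t n - \<tau> n) at_top sequentially" "\<forall>n. y n = U (\<sigma> n) (t n) (\<tau> n) (x n)"
    using assms(2) unfolding seq_collection_def by blast
  obtain T where T: "\<And>t \<tau> \<sigma> z. \<tau> \<le> t \<Longrightarrow> T \<le> t - \<tau> \<Longrightarrow> \<sigma> \<in> \<Sigma> \<Longrightarrow> z \<in> range x \<Longrightarrow>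
      infdist (U \<sigma> t \<tau> z) K < e"
    using unif_attracting_imp_infdist_less[OF assms(1) y(1) \<open>e > 0\<close>] by blast
  have "eventually (\<lambda>n. T \<le> t n - \<tau> n) sequentially"
    using y(4) by (simp add: filterlim_at_top)
  then show "eventually (\<lambda>n. dist (infdist (y n) K) 0 < e) sequentially"
    by eventually_elim (use T y(2,3,5) in \<open>simp add: infdist_nonneg\<close>)
qed

lemma unif_attracting_if_subseq_infdist_tendsto:
  fixes U :: "'s \<Rightarrow> real \<Rightarrow> real \<Rightarrow> 'a::metric_space \<Rightarrow> 'a"
  assumes "\<Sigma> \<noteq> {}" "K \<noteq> {}"
    and subseq: "\<And>y. y \<in> seq_collection U \<Sigma> \<Longrightarrow>
      \<exists>r. strict_mono r \<and> (\<lambda>n. infdist (y (r n)) K) \<longlonglongrightarrow> 0"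
  shows "unif_attracting U \<Sigma> K"
proof (rule unif_attracting_if_infdist_less[OF assms(1,2)], rule ccontr)
  fix C :: "'a set" and e :: real
  assume "bounded C" "e > 0"
    and "\<nexists>T. \<forall>t \<tau>. \<tau> \<le> t \<longrightarrow> T \<le> t - \<tau> \<longrightarrow> (\<forall>\<sigma>\<in>\<Sigma>. \<forall>x\<in>C. infdist (U \<sigma> t \<tau> x) K < e)"
  then have "\<forall>n. \<exists>t \<tau> \<sigma> x. \<tau> \<le> t \<and> real n \<le> t - \<tau> \<and> \<sigma> \<in> \<Sigma> \<and> x \<in> C \<and>
      e \<le> infdist (U \<sigma> t \<tau> x) K"
    by (meson not_less)
  then obtain t \<tau> \<sigma> x where bad: "\<And>n. \<tau> n \<le> t n \<and> real n \<le> t n - \<tau> n \<and> \<sigma> n \<in> \<Sigma> \<and> x n \<in> C \<and>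
      e \<le> infdist (U (\<sigma> n) (t n) (\<tau> n) (x n)) K"
    by metis
  have "bounded (range x)"
    using \<open>bounded C\<close> by (rule bounded_subset) (use bad in auto)
  then have "(\<lambda>n. U (\<sigma> n) (t n) (\<tau> n) (x n)) \<in> seq_collection U \<Sigma>"
    by (rule seq_collectionI) (use bad in auto)
  then obtain r where "(\<lambda>n. infdist (U (\<sigma> (r n)) (t (r n)) (\<tau> (r n)) (x (r n))) K) \<longlonglongrightarrow> 0"
    using subseq by blast
  then have "eventually (\<lambda>n. infdist (U (\<sigma> (r n)) (t (r n)) (\<tau> (r n)) (x (r n))) K < e) sequentially"
    using \<open>e > 0\<close> by (rule order_tendstoD)
  then show False
    using bad by (auto simp: not_less[symmetric] dest: eventually_happens')
qed

lemma seq_collection_convergent_subseq: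
  assumes "compact K" "unif_attracting U \<Sigma> K" "y \<in> seq_collection U \<Sigma>"
  obtains l r where "l \<in> K" "strict_mono r" "(y \<circ> r) \<longlonglongrightarrow> l"
  using compact_infdist_tendsto_imp_convergent_subseq[OF assms(1)
      unif_attracting_nonempty(2)[OF assms(2)] unif_attracting_imp_infdist_tendsto[OF assms(2,3)]] .

lemma Astar_subset:
  assumes "closed K" "unif_attracting U \<Sigma> K"
  shows "Astar U \<Sigma> \<subseteq> K"
proof
  fix l
  assume "l \<in> Astar U \<Sigma>"
  then obtain y r where y: "y \<in> seq_collection U \<Sigma>" "strict_mono r" "(y \<circ> r) \<longlonglongrightarrow> l"
    unfolding Astar_def by blast
  have "(\<lambda>n. infdist ((y \<circ> r) n) K) \<longlonglongrightarrow> 0"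
    using LIMSEQ_subseq_LIMSEQ[OF unif_attracting_imp_infdist_tendsto[OF assms(2) y(1)] y(2)]
    by (simp add: comp_def)
  moreover have "(\<lambda>n. infdist ((y \<circ> r) n) K) \<longlonglongrightarrow> infdist l K"
    using y(3) by (rule tendsto_infdist)
  ultimately have "infdist l K = 0"
    using LIMSEQ_unique by blast
  then show "l \<in> K"
    using in_closed_iff_infdist_zero[OF assms(1) unif_attracting_nonempty(2)[OF assms(2)]] by blast
qed

definition images_after ::
  "('s \<Rightarrow> real \<Rightarrow> real \<Rightarrow> 'a \<Rightarrow> 'a) \<Rightarrow> 's set \<Rightarrow> 'a set \<Rightarrow> nat \<Rightarrow> 'a set" where
  "images_after U \<Sigma> B N = {U \<sigma> t \<tau> z | \<sigma> t \<tau> z. \<sigma> \<in> \<Sigma> \<and> \<tau> \<le> t \<and> real N \<le> t - \<tau> \<and> z \<in> B}"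

lemma Inter_closure_images_after_subset_Astar:
  assumes "bounded B"
  shows "(\<Inter>N. closure (images_after U \<Sigma> B N)) \<subseteq> Astar U \<Sigma>"
proof
  fix l
  assume "l \<in> (\<Inter>N. closure (images_after U \<Sigma> B N))"
  then have "l \<in> closure (images_after U \<Sigma> B n)" for n
    by blast
  then have "\<exists>w\<in>images_after U \<Sigma> B n. dist w l < inverse (real (Suc n))" for n
    unfolding closure_approachable by (meson inverse_positive_iff_positive of_nat_0_less_iff zero_less_Suc)
  then have "\<exists>\<sigma> t \<tau> z. \<sigma> \<in> \<Sigma> \<and> \<tau> \<le> t \<and> real n \<le> t - \<tau> \<and> z \<in> B \<and>
      dist (U \<sigma> t \<tau> z) l < inverse (real (Suc n))" for n
    unfolding images_after_def by blast
  then obtain \<sigma> t \<tau> z where h: "\<And>n. \<sigma> n \<in> \<Sigma> \<and> \<tau> n \<le> t n \<and> real n \<le> t n - \<tau> n \<and> z n \<in> B \<and>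
      dist (U (\<sigma> n) (t n) (\<tau> n) (z n)) l < inverse (real (Suc n))"
    by metis
  let ?y = "\<lambda>n. U (\<sigma> n) (t n) (\<tau> n) (z n)"
  have "bounded (range z)"
    using assms by (rule bounded_subset) (use h in auto)
  then have "?y \<in> seq_collection U \<Sigma>"
    by (rule seq_collectionI) (use h in auto)
  moreover have "(\<lambda>n. dist (?y n) l) \<longlonglongrightarrow> 0"
    by (rule Lim_null_comparison[OF _ LIMSEQ_inverse_real_of_nat]) (use h in \<open>simp add: less_imp_le\<close>)
  then have "(?y \<circ> id) \<longlonglongrightarrow> l"
    unfolding comp_id by (rule tendsto_dist_iff[THEN iffD2])
  ultimately show "l \<in> Astar U \<Sigma>"
    unfolding Astar_def using strict_mono_id by blast
qed

lemma Astar_subset_closure_images_after: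
  assumes process: "\<forall>\<sigma>\<in>\<Sigma>. process (U \<sigma>)" and "unif_attracting U \<Sigma> K" "e > 0"
  shows "Astar U \<Sigma> \<subseteq> closure (images_after U \<Sigma> {z. infdist z K \<le> e} N)"
proof
  fix l
  assume "l \<in> Astar U \<Sigma>"
  then obtain y r where "y \<in> seq_collection U \<Sigma>" "strict_mono r" and yl: "(y \<circ> r) \<longlonglongrightarrow> l"
    unfolding Astar_def by blast
  then obtain x \<sigma> t \<tau> where y: "bounded (range x)" "\<forall>n. \<sigma> n \<in> \<Sigma>" "\<forall>n. \<tau> n \<le> t n"
    "filterlim (\<lambda>n. t (r n) - \<tau> (r n)) at_top sequentially" "\<forall>n. y n = U (\<sigma> n) (t n) (\<tau> n) (x n)"
    unfolding seq_collection_def using filterlim_compose filterlim_subseq by blast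
  obtain T where T: "\<And>t \<tau> \<sigma> z. \<tau> \<le> t \<Longrightarrow> T \<le> t - \<tau> \<Longrightarrow> \<sigma> \<in> \<Sigma> \<Longrightarrow> z \<in> range x \<Longrightarrow>
      infdist (U \<sigma> t \<tau> z) K < e"
    using unif_attracting_imp_infdist_less[OF assms(2) y(1) \<open>e > 0\<close>] by blast
  let ?T = "max T 0"
  show "l \<in> closure (images_after U \<Sigma> {z. infdist z K \<le> e} N)"
    unfolding closure_approachable
  proof (intro allI impI)
    fix \<epsilon> :: real
    assume "\<epsilon> > 0"
    have "eventually (\<lambda>n. ?T + real N \<le> t (r n) - \<tau> (r n) \<and> dist (y (r n)) l < \<epsilon>) sequentially"
      using y(4) yl \<open>\<epsilon> > 0\<close> by (auto simp: filterlim_at_top comp_def intro: eventually_conj tendstoD)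
    then obtain m where m: "?T + real N \<le> t m - \<tau> m" "dist (y m) l < \<epsilon>"
      using eventually_happens'[OF sequentially_bot] by blast
    \<comment> \<open>restart the orbit at time \<open>s\<close>, by which it is already \<open>e\<close>-close to \<open>K\<close>\<close>
    define s where "s = \<tau> m + ?T"
    define z where "z = U (\<sigma> m) s (\<tau> m) (x m)"
    have s: "\<tau> m \<le> s" "s \<le> t m" "real N \<le> t m - s"
      using m(1) unfolding s_def by auto
    have "infdist z K \<le> e"
      using T y(2) s(1) unfolding z_def s_def by (simp add: less_imp_le)
    moreover have "y m = U (\<sigma> m) (t m) s z"
      using process y(2,5) s(1,2) unfolding z_def process_def by (metis comp_apply)
    ultimately have "y m \<in> images_after U \<Sigma> {z. infdist z K \<le> e} N"
      unfolding images_after_def using y(2) s(2,3) by blast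
    with m(2) show "\<exists>w\<in>images_after U \<Sigma> {z. infdist z K \<le> e} N. dist w l < \<epsilon>"
      by blast
  qed
qed

lemma closed_Astar:
  assumes "\<forall>\<sigma>\<in>\<Sigma>. process (U \<sigma>)" "compact K" "unif_attracting U \<Sigma> K"
  shows "closed (Astar U \<Sigma>)"
proof -
  let ?B = "{z. infdist z K \<le> 1}"
  have "bounded ?B"
    using bounded_infdist_le compact_imp_bounded[OF assms(2)] unif_attracting_nonempty(2)[OF assms(3)] .
  have "Astar U \<Sigma> = (\<Inter>N. closure (images_after U \<Sigma> ?B N))"
  proof
    show "Astar U \<Sigma> \<subseteq> (\<Inter>N. closure (images_after U \<Sigma> ?B N))"
      by (rule INT_greatest) (rule Astar_subset_closure_images_after[OF assms(1,3) zero_less_one])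
    show "(\<Inter>N. closure (images_after U \<Sigma> ?B N)) \<subseteq> Astar U \<Sigma>"
      by (rule Inter_closure_images_after_subset_Astar) fact
  qed
  then show ?thesis
    by (simp add: closed_INT)
qed

lemma Astar_nonempty:
  assumes "compact K" "unif_attracting U \<Sigma> K"
  shows "Astar U \<Sigma> \<noteq> {}"
proof -
  obtain \<sigma> where "\<sigma> \<in> \<Sigma>"
    using unif_attracting_nonempty(1)[OF assms(2)] by blast
  then have "(\<lambda>n. U \<sigma> (real n) 0 undefined) \<in> seq_collection U \<Sigma>"
    using seq_collectionI[where \<sigma>="\<lambda>_. \<sigma>" and t=real and \<tau>="\<lambda>_. 0" and x="\<lambda>_. undefined"] by simp
  then obtain l r where "strict_mono r" "((\<lambda>n. U \<sigma> (real n) 0 undefined) \<circ> r) \<longlonglongrightarrow> l"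
    using seq_collection_convergent_subseq[OF assms] by blast
  with \<open>(\<lambda>n. U \<sigma> (real n) 0 undefined) \<in> seq_collection U \<Sigma>\<close> have "l \<in> Astar U \<Sigma>"
    unfolding Astar_def by blast
  then show ?thesis
    by blast
qed

lemma seq_collection_subseq_infdist_Astar_tendsto:
  assumes "compact K" "unif_attracting U \<Sigma> K" "y \<in> seq_collection U \<Sigma>"
  shows "\<exists>r. strict_mono r \<and> (\<lambda>n. infdist (y (r n)) (Astar U \<Sigma>)) \<longlonglongrightarrow> 0"
proof -
  obtain l r where r: "strict_mono r" "(y \<circ> r) \<longlonglongrightarrow> l"
    using seq_collection_convergent_subseq[OF assms] by blast
  with assms(3) have "l \<in> Astar U \<Sigma>"
    unfolding Astar_def by blast
  then have "(\<lambda>n. infdist (y (r n)) (Astar U \<Sigma>)) \<longlonglongrightarrow> 0"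
    using tendsto_infdist[OF r(2), of "Astar U \<Sigma>"] by (simp add: comp_def)
  with r(1) show ?thesis
    by blast
qed

theorem proposition2p11:
  fixes U :: "'s::metric_space \<Rightarrow> real \<Rightarrow> real \<Rightarrow> 'a::metric_space \<Rightarrow> 'a"
    and \<Sigma> :: "'s set"
  assumes "\<forall>\<sigma>\<in>\<Sigma>. process (U \<sigma>)"
    and "unif_asymp_compact U \<Sigma>"
  shows "compact (Astar U \<Sigma>) \<and> unif_attracting U \<Sigma> (Astar U \<Sigma>)"
proof -
  obtain K where K: "compact K" "unif_attracting U \<Sigma> K"
    using assms(2) unfolding unif_asymp_compact_def by blast
  have "Astar U \<Sigma> \<subseteq> K"
    using Astar_subset[OF compact_imp_closed[OF K(1)] K(2)] .
  then have "compact (Astar U \<Sigma>)"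
    using compact_Int_closed[OF K(1) closed_Astar[OF assms(1) K]] by (simp add: Int_absorb1)
  moreover have "unif_attracting U \<Sigma> (Astar U \<Sigma>)"
    using unif_attracting_nonempty(1)[OF K(2)] Astar_nonempty[OF K]
      seq_collection_subseq_infdist_Astar_tendsto[OF K]
    by (rule unif_attracting_if_subseq_infdist_tendsto)
  ultimately show ?thesis ..
qed

end
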